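(* Let $\mathcal{C}$ be a d-category and $f:Y\to X$ a morphism of $\mathcal{C}$-automata such that $f$ is future open, $\bot_X\subseteq f(\bot_Y)$ and $\top_Y=f^{-1}(\top_X)$. Then $\mathrm{Lang}(Y)=\mathrm{Lang}(X)$.
   Context: A d-category is a small category $\mathcal{C}$ with wide subcategories $\mathcal{C}^+$ (formorphisms) and $\mathcal{C}^-$ (backmorphisms) such that an invertible $\varphi$ is in $\mathcal{C}^+$ iff $\varphi^{-1}\in\mathcal{C}^-$. A $\mathcal{C}$-automaton is a presheaf $X:\mathcal{C}^{op}\to\mathbf{Set}$ with sets $\bot_X,\top_X$ of start and accept elements (elements being pairs $(U,x)$, $x\in X[U]$); morphisms of automata are presheaf maps sending start elements to start elements and accept elements to accept elements. A presheaf map $f:Y\to X$ is future open if for every $\varphi\in\mathcal{C}^+(V,U)$, $y\in Y[V]$, $x\in X[U]$ with $X[\varphi](x)=f(y)$ there is $\bar y\in Y[U]$ with $Y[\varphi](\bar y)=y$ and $f(\bar y)=x$. A linear category is a bipointed d-category isomorphic to a finite (possibly empty) concatenation (gluing $\top$ to $\bot$) of $\mathbf S$ (formorphism $\bot\to\top$), $\mathbf T$ (backmorphism $\top\to\bot$), $\mathbf I$ (inverse pair); a path is a d-functor $\omega:\mathcal I\to\mathcal{C}$ from one; its track object is the automaton $\operatorname{colim}_i\mathcal{C}(-,\omega(i))$ with single start element the image of $\mathrm{id}_{\omega(\bot)}$ and single accept element the image of $\mathrm{id}_{\omega(\top)}$; track objects are automata isomorphic to such. $\mathrm{Lang}(X)$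 is the class of track objects $\Gamma$ admitting a morphism of automata $\Gamma\to X$. *)

theory Defs
  imports Main
begin

text \<open>A small category is given by a set of objects, hom-sets, composition
  (cmp g f = g after f, for f : A -> B, g : B -> C) and identities.
  fwd A B are the formorphisms A -> B (the wide subcategory C+),
  bwd A B the backmorphisms A -> B (the wide subcategory C-).\<close>

record ('o, 'm) dcat =
  obj :: "'o set"
  hom :: "'o \<Rightarrow> 'o \<Rightarrow> 'm set"
  cmp :: "'m \<Rightarrow> 'm \<Rightarrow> 'm"
  idm :: "'o \<Rightarrow> 'm"
  fwd :: "'o \<Rightarrow> 'o \<Rightarrow> 'm set"
  bwd :: "'o \<Rightarrow> 'o \<Rightarrow> 'm set"

definition category :: "('o, 'm, 'z) dcat_scheme \<Rightarrow> bool" where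
  "category C \<longleftrightarrow>
     (\<forall>A B. hom C A B \<noteq> {} \<longrightarrow> A \<in> obj C \<and> B \<in> obj C) \<and>
     (\<forall>A \<in> obj C. idm C A \<in> hom C A A) \<and>
     (\<forall>A B Z f g. f \<in> hom C A B \<longrightarrow> g \<in> hom C B Z \<longrightarrow> cmp C g f \<in> hom C A Z) \<and>
     (\<forall>A B f. f \<in> hom C A B \<longrightarrow> cmp C (idm C B) f = f \<and> cmp C f (idm C A) = f) \<and>
     (\<forall>A B Z W f g h. f \<in> hom C A B \<longrightarrow> g \<in> hom C B Z \<longrightarrow> h \<in> hom C Z W \<longrightarrow>
        cmp C h (cmp C g f) = cmp C (cmp C h g) f)"

definition inverse_pair :: "('o, 'm, 'z) dcat_scheme \<Rightarrow> 'o \<Rightarrow> 'o \<Rightarrow> 'm \<Rightarrow> 'm \<Rightarrow> bool" where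
  "inverse_pair C A B \<phi> \<psi> \<longleftrightarrow> \<phi> \<in> hom C A B \<and> \<psi> \<in> hom C B A \<and>
     cmp C \<psi> \<phi> = idm C A \<and> cmp C \<phi> \<psi> = idm C B"

definition invertible :: "('o, 'm, 'z) dcat_scheme \<Rightarrow> 'o \<Rightarrow> 'o \<Rightarrow> 'm \<Rightarrow> bool" where
  "invertible C A B \<phi> \<longleftrightarrow> (\<exists>\<psi>. inverse_pair C A B \<phi> \<psi>)"

definition wide_subcat :: "('o, 'm, 'z) dcat_scheme \<Rightarrow> ('o \<Rightarrow> 'o \<Rightarrow> 'm set) \<Rightarrow> bool" where
  "wide_subcat C S \<longleftrightarrow>
     (\<forall>A B. S A B \<subseteq> hom C A B) \<and>
     (\<forall>A \<in> obj C. idm C A \<in> S A A) \<and>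
     (\<forall>A B Z f g. f \<in> S A B \<longrightarrow> g \<in> S B Z \<longrightarrow> cmp C g f \<in> S A Z)"

definition d_category :: "('o, 'm, 'z) dcat_scheme \<Rightarrow> bool" where
  "d_category C \<longleftrightarrow> category C \<and> wide_subcat C (fwd C) \<and> wide_subcat C (bwd C) \<and>
     (\<forall>A B \<phi> \<psi>. inverse_pair C A B \<phi> \<psi> \<longrightarrow> (\<phi> \<in> fwd C A B \<longleftrightarrow> \<psi> \<in> bwd C B A))"

text \<open>A presheaf X : C^op -> Set: el X U is the set X[U]; for \<phi> : V -> U,
  act X V U \<phi> is the map X[\<phi>] : X[U] -> X[V].\<close>

record ('o, 'm, 'x) automaton =
  el :: "'o \<Rightarrow> 'x set"
  act :: "'o \<Rightarrow> 'o \<Rightarrow> 'm \<Rightarrow> 'x \<Rightarrow> 'x"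
  start :: "('o \<times> 'x) set"
  accept :: "('o \<times> 'x) set"

definition elements :: "('o, 'm, 'z) dcat_scheme \<Rightarrow> ('o, 'm, 'x) automaton \<Rightarrow> ('o \<times> 'x) set" where
  "elements C X = {(U, x). U \<in> obj C \<and> x \<in> el X U}"

definition presheaf :: "('o, 'm, 'z) dcat_scheme \<Rightarrow> ('o, 'm, 'x) automaton \<Rightarrow> bool" where
  "presheaf C X \<longleftrightarrow>
     (\<forall>V U \<phi> x. \<phi> \<in> hom C V U \<longrightarrow> x \<in> el X U \<longrightarrow> act X V U \<phi> x \<in> el X V) \<and>
     (\<forall>U \<in> obj C. \<forall>x \<in> el X U. act X U U (idm C U) x = x) \<and>
     (\<forall>W V U \<phi> \<psi> x. \<phi> \<in> hom C W V \<longrightarrow> \<psi> \<in> hom C V U \<longrightarrow> x \<in> el X U \<longrightarrow>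
        act X W U (cmp C \<psi> \<phi>) x = act X W V \<phi> (act X V U \<psi> x))"

definition is_automaton :: "('o, 'm, 'z) dcat_scheme \<Rightarrow> ('o, 'm, 'x) automaton \<Rightarrow> bool" where
  "is_automaton C X \<longleftrightarrow> presheaf C X \<and> start X \<subseteq> elements C X \<and> accept X \<subseteq> elements C X"

definition presheaf_map :: "('o, 'm, 'z) dcat_scheme \<Rightarrow> ('o, 'm, 'y) automaton \<Rightarrow>
    ('o, 'm, 'x) automaton \<Rightarrow> ('o \<Rightarrow> 'y \<Rightarrow> 'x) \<Rightarrow> bool" where
  "presheaf_map C Y X f \<longleftrightarrow>
     (\<forall>U \<in> obj C. \<forall>y \<in> el Y U. f U y \<in> el X U) \<and>
     (\<forall>V U \<phi> y. \<phi> \<in> hom C V U \<longrightarrow> y \<in> el Y U \<longrightarrow> f V (act Y V U \<phi> y) = act X V U \<phi> (f U y))"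

definition el_image :: "('o \<Rightarrow> 'y \<Rightarrow> 'x) \<Rightarrow> ('o \<times> 'y) set \<Rightarrow> ('o \<times> 'x) set" where
  "el_image f S = {(U, f U y) | U y. (U, y) \<in> S}"

definition aut_mor :: "('o, 'm, 'z) dcat_scheme \<Rightarrow> ('o, 'm, 'y) automaton \<Rightarrow>
    ('o, 'm, 'x) automaton \<Rightarrow> ('o \<Rightarrow> 'y \<Rightarrow> 'x) \<Rightarrow> bool" where
  "aut_mor C Y X f \<longleftrightarrow> presheaf_map C Y X f \<and>
     el_image f (start Y) \<subseteq> start X \<and> el_image f (accept Y) \<subseteq> accept X"

definition aut_iso :: "('o, 'm, 'z) dcat_scheme \<Rightarrow> ('o, 'm, 'y) automaton \<Rightarrow>
    ('o, 'm, 'x) automaton \<Rightarrow> bool" where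
  "aut_iso C Y X \<longleftrightarrow> (\<exists>f g. aut_mor C Y X f \<and> aut_mor C X Y g \<and>
     (\<forall>U \<in> obj C. \<forall>y \<in> el Y U. g U (f U y) = y) \<and>
     (\<forall>U \<in> obj C. \<forall>x \<in> el X U. f U (g U x) = x))"

definition future_open :: "('o, 'm, 'z) dcat_scheme \<Rightarrow> ('o, 'm, 'y) automaton \<Rightarrow>
    ('o, 'm, 'x) automaton \<Rightarrow> ('o \<Rightarrow> 'y \<Rightarrow> 'x) \<Rightarrow> bool" where
  "future_open C Y X f \<longleftrightarrow>
     (\<forall>V U \<phi> y x. \<phi> \<in> fwd C V U \<longrightarrow> y \<in> el Y V \<longrightarrow> x \<in> el X U \<longrightarrow>
        act X V U \<phi> x = f V y \<longrightarrow>
        (\<exists>y' \<in> el Y U. act Y V U \<phi> y' = y \<and> f U y' = x))"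

text \<open>A linear category is (up to isomorphism) a concatenation of n pieces,
  each S (a formorphism bot -> top), T (a backmorphism top -> bot) or I (an
  inverse pair).  A d-functor \<omega> from it into C is determined by the objects
  U 0, ..., U n (images of the vertices) and, for each k < n, the image mor k
  of the generating morphism of the k-th piece:
   S: mor k \<in> C+(U k, U (k+1));  T: mor k \<in> C-(U (k+1), U k);
   I: mor k : U k -> U (k+1) invertible (its inverse being the image of the
      inverse morphism).\<close>

datatype piece = PS | PT | PI

definition is_path :: "('o, 'm, 'z) dcat_scheme \<Rightarrow> nat \<Rightarrow> (nat \<Rightarrow> 'o) \<Rightarrow> (nat \<Rightarrow> piece) \<Rightarrow>
    (nat \<Rightarrow> 'm) \<Rightarrow> bool" where
  "is_path C n U kd mor \<longleftrightarrow>
     (\<forall>k \<le> n. U k \<in> obj C) \<and>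
     (\<forall>k < n.
        (kd k = PS \<longrightarrow> mor k \<in> fwd C (U k) (U (Suc k))) \<and>
        (kd k = PT \<longrightarrow> mor k \<in> bwd C (U (Suc k)) (U k)) \<and>
        (kd k = PI \<longrightarrow> invertible C (U k) (U (Suc k)) (mor k)))"

text \<open>The colimit of the representables C(-, U k) along the path, computed
  pointwise: the quotient of the disjoint union of the hom-sets C(V, U k),
  k \<le> n, by the equivalence relation generated by the generating morphisms
  of the linear category.\<close>

definition trk_step :: "('o, 'm, 'z) dcat_scheme \<Rightarrow> nat \<Rightarrow> (nat \<Rightarrow> 'o) \<Rightarrow> (nat \<Rightarrow> piece) \<Rightarrow>
    (nat \<Rightarrow> 'm) \<Rightarrow> 'o \<Rightarrow> nat \<times> 'm \<Rightarrow> nat \<times> 'm \<Rightarrow> bool" where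
  "trk_step C n U kd mor V p q \<longleftrightarrow> (\<exists>k < n.
     (kd k \<noteq> PT \<and> (\<exists>g \<in> hom C V (U k). p = (k, g) \<and> q = (Suc k, cmp C (mor k) g))) \<or>
     (kd k = PT \<and> (\<exists>g \<in> hom C V (U (Suc k)). p = (Suc k, g) \<and> q = (k, cmp C (mor k) g))))"

definition trk_eq :: "('o, 'm, 'z) dcat_scheme \<Rightarrow> nat \<Rightarrow> (nat \<Rightarrow> 'o) \<Rightarrow> (nat \<Rightarrow> piece) \<Rightarrow>
    (nat \<Rightarrow> 'm) \<Rightarrow> 'o \<Rightarrow> nat \<times> 'm \<Rightarrow> nat \<times> 'm \<Rightarrow> bool" where
  "trk_eq C n U kd mor V = (symclp (trk_step C n U kd mor V))\<^sup>*\<^sup>*"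

definition trk_class :: "('o, 'm, 'z) dcat_scheme \<Rightarrow> nat \<Rightarrow> (nat \<Rightarrow> 'o) \<Rightarrow> (nat \<Rightarrow> piece) \<Rightarrow>
    (nat \<Rightarrow> 'm) \<Rightarrow> 'o \<Rightarrow> nat \<times> 'm \<Rightarrow> (nat \<times> 'm) set" where
  "trk_class C n U kd mor V p = {q. trk_eq C n U kd mor V p q}"

definition track_aut :: "('o, 'm, 'z) dcat_scheme \<Rightarrow> nat \<Rightarrow> (nat \<Rightarrow> 'o) \<Rightarrow> (nat \<Rightarrow> piece) \<Rightarrow>
    (nat \<Rightarrow> 'm) \<Rightarrow> ('o, 'm, (nat \<times> 'm) set) automaton" where
  "track_aut C n U kd mor =
     \<lparr> el = (\<lambda>V. {trk_class C n U kd mor V (k, g) | k g. k \<le> n \<and> g \<in> hom C V (U k)}),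
       act = (\<lambda>W V h c. {q. \<exists>(k, g) \<in> c. trk_eq C n U kd mor W (k, cmp C g h) q}),
       start = {(U 0, trk_class C n U kd mor (U 0) (0, idm C (U 0)))},
       accept = {(U n, trk_class C n U kd mor (U n) (n, idm C (U n)))} \<rparr>"

definition track_object :: "('o, 'm, 'z) dcat_scheme \<Rightarrow> ('o, 'm, 'g) automaton \<Rightarrow> bool" where
  "track_object C \<Gamma> \<longleftrightarrow> is_automaton C \<Gamma> \<and>
     (\<exists>n U kd mor. is_path C n U kd mor \<and> aut_iso C \<Gamma> (track_aut C n U kd mor))"

text \<open>Lang(X): track objects admitting a morphism of automata into X
  (track objects are taken with an arbitrary but fixed carrier type 'g).\<close>

definition Lang :: "('o, 'm, 'z) dcat_scheme \<Rightarrow> ('o, 'm, 'x) automaton \<Rightarrow> ('o, 'm, 'g) automaton set" where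
  "Lang C X = {\<Gamma>. track_object C \<Gamma> \<and> (\<exists>h. aut_mor C \<Gamma> X h)}"

end

theory Submission
  imports Defs
begin

text \<open>A morphism of automata from the track object of a path \<open>U 0, ..., U n\<close> into \<open>X\<close> is
  the same as a compatible family \<open>x k \<in> X[U k]\<close> with \<open>x 0\<close> a start and \<open>x n\<close> an accept
  element. Such a family lifts along \<open>f\<close> edge by edge, starting from a start element of \<open>Y\<close>
  above \<open>x 0\<close>: across a formorphism by future openness, across a backmorphism or an
  inverse pair by letting the morphism, resp. its inverse, act on \<open>Y\<close>. The last lifted
  element lies above the accept element \<open>x n\<close>, hence is accepting since
  \<open>\<top>\<^sub>Y = f\<^sup>-\<^sup>1(\<top>\<^sub>X)\<close>. The other inclusion is composition with \<open>f\<close>.\<close>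

lemma category_hom_objs: "category C \<Longrightarrow> f \<in> hom C A B \<Longrightarrow> A \<in> obj C \<and> B \<in> obj C"
  unfolding category_def by blast

lemma category_idm_hom: "category C \<Longrightarrow> A \<in> obj C \<Longrightarrow> idm C A \<in> hom C A A"
  unfolding category_def by blast

lemma category_cmp_hom:
  "category C \<Longrightarrow> f \<in> hom C A B \<Longrightarrow> g \<in> hom C B Z \<Longrightarrow> cmp C g f \<in> hom C A Z"
  unfolding category_def by blast

lemma category_idm_left: "category C \<Longrightarrow> f \<in> hom C A B \<Longrightarrow> cmp C (idm C B) f = f"
  unfolding category_def by blast

lemma category_idm_right: "category C \<Longrightarrow> f \<in> hom C A B \<Longrightarrow> cmp C f (idm C A) = f"
  unfolding category_def by blast

lemma category_cmp_assoc:
  "category C \<Longrightarrow> f \<in> hom C A B \<Longrightarrow> g \<in> hom C B Z \<Longrightarrow> h \<in> hom C Z W \<Longrightarrow>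
   cmp C h (cmp C g f) = cmp C (cmp C h g) f"
  unfolding category_def by blast

lemma d_category_category: "d_category C \<Longrightarrow> category C"
  by (simp add: d_category_def)

lemma fwd_hom: "d_category C \<Longrightarrow> \<phi> \<in> fwd C A B \<Longrightarrow> \<phi> \<in> hom C A B"
  unfolding d_category_def wide_subcat_def by (meson subsetD)

lemma bwd_hom: "d_category C \<Longrightarrow> \<phi> \<in> bwd C A B \<Longrightarrow> \<phi> \<in> hom C A B"
  unfolding d_category_def wide_subcat_def by (meson subsetD)

lemma presheaf_act_el: "presheaf C X \<Longrightarrow> \<phi> \<in> hom C V U \<Longrightarrow> x \<in> el X U \<Longrightarrow> act X V U \<phi> x \<in> el X V"
  unfolding presheaf_def by blast

lemma presheaf_act_idm: "presheaf C X \<Longrightarrow> U \<in> obj C \<Longrightarrow> x \<in> el X U \<Longrightarrow> act X U U (idm C U) x = x"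
  unfolding presheaf_def by blast

lemma presheaf_act_cmp:
  "presheaf C X \<Longrightarrow> \<phi> \<in> hom C W V \<Longrightarrow> \<psi> \<in> hom C V U \<Longrightarrow> x \<in> el X U \<Longrightarrow>
   act X W U (cmp C \<psi> \<phi>) x = act X W V \<phi> (act X V U \<psi> x)"
  unfolding presheaf_def by blast

lemma presheaf_map_el: "presheaf_map C Y X f \<Longrightarrow> U \<in> obj C \<Longrightarrow> y \<in> el Y U \<Longrightarrow> f U y \<in> el X U"
  unfolding presheaf_map_def by blast

lemma presheaf_map_act:
  "presheaf_map C Y X f \<Longrightarrow> \<phi> \<in> hom C V U \<Longrightarrow> y \<in> el Y U \<Longrightarrow>
   f V (act Y V U \<phi> y) = act X V U \<phi> (f U y)"
  unfolding presheaf_map_def by blast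

lemma future_openD:
  "future_open C Y X f \<Longrightarrow> \<phi> \<in> fwd C V U \<Longrightarrow> y \<in> el Y V \<Longrightarrow> x \<in> el X U \<Longrightarrow>
   act X V U \<phi> x = f V y \<Longrightarrow> \<exists>y' \<in> el Y U. act Y V U \<phi> y' = y \<and> f U y' = x"
  unfolding future_open_def by blast

lemma inverse_pair_sym: "inverse_pair C A B \<phi> \<psi> \<Longrightarrow> inverse_pair C B A \<psi> \<phi>"
  unfolding inverse_pair_def by blast

lemma presheaf_act_inverse:
  assumes "category C" and X: "presheaf C X" and \<phi>\<psi>: "inverse_pair C A B \<phi> \<psi>" and x: "x \<in> el X A"
  shows "act X A B \<phi> (act X B A \<psi> x) = x"
proof -
  have \<phi>: "\<phi> \<in> hom C A B" and \<psi>: "\<psi> \<in> hom C B A" and "cmp C \<psi> \<phi> = idm C A"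
    using \<phi>\<psi> unfolding inverse_pair_def by auto
  then have "act X A B \<phi> (act X B A \<psi> x) = act X A A (idm C A) x"
    using presheaf_act_cmp[OF X \<phi> \<psi> x] by simp
  also have "\<dots> = x"
    using presheaf_act_idm[OF X _ x] category_hom_objs[OF \<open>category C\<close> \<phi>] by blast
  finally show ?thesis .
qed

lemma el_image_iff: "(U, x) \<in> el_image f S \<longleftrightarrow> (\<exists>y. (U, y) \<in> S \<and> x = f U y)"
  unfolding el_image_def by auto

lemma el_image_singleton [simp]: "el_image f {(U, y)} = {(U, f U y)}"
  unfolding el_image_def by auto

lemma el_image_comp: "el_image (\<lambda>U. g U \<circ> f U) S = el_image g (el_image f S)"
  unfolding el_image_def by auto

lemma el_image_mono: "S \<subseteq> S' \<Longrightarrow> el_image f S \<subseteq> el_image f S'"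
  unfolding el_image_def by auto

lemma presheaf_map_comp:
  assumes "category C" and f: "presheaf_map C A B f" and g: "presheaf_map C B D g"
  shows "presheaf_map C A D (\<lambda>U. g U \<circ> f U)"
  unfolding presheaf_map_def
proof (intro conjI allI ballI impI)
  fix U a assume "U \<in> obj C" "a \<in> el A U"
  then show "(g U \<circ> f U) a \<in> el D U"
    using presheaf_map_el[OF f] presheaf_map_el[OF g] by simp
next
  fix V U \<phi> a assume \<phi>: "\<phi> \<in> hom C V U" and a: "a \<in> el A U"
  have "U \<in> obj C"
    using category_hom_objs[OF \<open>category C\<close> \<phi>] by (rule conjunct2)
  then have fa: "f U a \<in> el B U"
    using presheaf_map_el[OF f _ a] by simp
  show "(g V \<circ> f V) (act A V U \<phi> a) = act D V U \<phi> ((g U \<circ> f U) a)"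
    using presheaf_map_act[OF f \<phi> a] presheaf_map_act[OF g \<phi> fa] by simp
qed

lemma aut_mor_comp:
  assumes "category C" and f: "aut_mor C A B f" and g: "aut_mor C B D g"
  shows "aut_mor C A D (\<lambda>U. g U \<circ> f U)"
proof -
  have "el_image g (el_image f (start A)) \<subseteq> start D"
    using f g el_image_mono[of _ _ g] unfolding aut_mor_def by blast
  moreover have "el_image g (el_image f (accept A)) \<subseteq> accept D"
    using f g el_image_mono[of _ _ g] unfolding aut_mor_def by blast
  ultimately show ?thesis
    using presheaf_map_comp[OF \<open>category C\<close>] f g unfolding aut_mor_def el_image_comp by blast
qed

lemma aut_iso_ex_aut_mor_iff:
  assumes "category C" and "aut_iso C \<Gamma> \<Delta>"
  shows "(\<exists>h. aut_mor C \<Gamma> X h) \<longleftrightarrow> (\<exists>h. aut_mor C \<Delta> X h)"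
proof -
  obtain F G where F: "aut_mor C \<Gamma> \<Delta> F" and G: "aut_mor C \<Delta> \<Gamma> G"
    using assms(2) unfolding aut_iso_def by blast
  show ?thesis
  proof
    assume "\<exists>h. aut_mor C \<Gamma> X h"
    then show "\<exists>h. aut_mor C \<Delta> X h"
      using aut_mor_comp[OF assms(1) G] by blast
  next
    assume "\<exists>h. aut_mor C \<Delta> X h"
    then show "\<exists>h. aut_mor C \<Gamma> X h"
      using aut_mor_comp[OF assms(1) F] by blast
  qed
qed

lemma Lang_mono_aut_mor: "category C \<Longrightarrow> aut_mor C Y X f \<Longrightarrow> Lang C Y \<subseteq> Lang C X"
  unfolding Lang_def using aut_mor_comp by blast

definition dom_idx :: "(nat \<Rightarrow> piece) \<Rightarrow> nat \<Rightarrow> nat" where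
  "dom_idx kd k = (if kd k = PT then Suc k else k)"

definition cod_idx :: "(nat \<Rightarrow> piece) \<Rightarrow> nat \<Rightarrow> nat" where
  "cod_idx kd k = (if kd k = PT then k else Suc k)"

lemma dom_cod_idx_le: "k < n \<Longrightarrow> dom_idx kd k \<le> n \<and> cod_idx kd k \<le> n"
  by (simp add: dom_idx_def cod_idx_def)

text \<open>By the Yoneda lemma, compatible families of \<open>X\<close> along a path are the presheaf maps
  from its track object into \<open>X\<close>.\<close>

definition compatible_family :: "('o, 'm, 'x) automaton \<Rightarrow> nat \<Rightarrow> (nat \<Rightarrow> 'o) \<Rightarrow>
    (nat \<Rightarrow> piece) \<Rightarrow> (nat \<Rightarrow> 'm) \<Rightarrow> (nat \<Rightarrow> 'x) \<Rightarrow> bool" where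
  "compatible_family X n U kd mor x \<longleftrightarrow>
     (\<forall>k \<le> n. x k \<in> el X (U k)) \<and>
     (\<forall>k < n. act X (U (dom_idx kd k)) (U (cod_idx kd k)) (mor k) (x (cod_idx kd k)) = x (dom_idx kd k))"

lemma compatible_family_cong:
  assumes "\<And>k. k \<le> n \<Longrightarrow> x k = x' k"
  shows "compatible_family X n U kd mor x \<longleftrightarrow> compatible_family X n U kd mor x'"
proof -
  have "\<And>k. k < n \<Longrightarrow> x (dom_idx kd k) = x' (dom_idx kd k) \<and> x (cod_idx kd k) = x' (cod_idx kd k)"
    using assms dom_cod_idx_le by blast
  then show ?thesis
    unfolding compatible_family_def using assms by simp
qed

lemma compatible_family_Suc:
  "compatible_family X (Suc n) U kd mor x \<longleftrightarrow>
     compatible_family X n U kd mor x \<and> x (Suc n) \<in> el X (U (Suc n)) \<and>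
     act X (U (dom_idx kd n)) (U (cod_idx kd n)) (mor n) (x (cod_idx kd n)) = x (dom_idx kd n)"
  unfolding compatible_family_def by (auto simp: le_Suc_eq less_Suc_eq)

lemma trk_eq_equivclp: "trk_eq C n U kd mor V = equivclp (trk_step C n U kd mor V)"
  by (simp add: trk_eq_def equivclp_def)

lemma trk_class_equivclp:
  "trk_class C n U kd mor V p = {q. equivclp (trk_step C n U kd mor V) p q}"
  by (simp add: trk_class_def trk_eq_equivclp)

locale d_path =
  fixes C :: "('o, 'm, 'z) dcat_scheme" and n :: nat and U :: "nat \<Rightarrow> 'o"
    and kd :: "nat \<Rightarrow> piece" and mor :: "nat \<Rightarrow> 'm"
  assumes dcat: "d_category C" and path: "is_path C n U kd mor"
begin

abbreviation "track \<equiv> track_aut C n U kd mor"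
abbreviation "tstep \<equiv> trk_step C n U kd mor"
abbreviation "tclass \<equiv> trk_class C n U kd mor"
abbreviation "vertex k \<equiv> tclass (U k) (k, idm C (U k))"

definition path_arrow :: "'o \<Rightarrow> nat \<times> 'm \<Rightarrow> bool" where
  "path_arrow V p \<longleftrightarrow> fst p \<le> n \<and> snd p \<in> hom C V (U (fst p))"

lemma category: "category C"
  using dcat by (rule d_category_category)

lemma vertex_obj: "k \<le> n \<Longrightarrow> U k \<in> obj C"
  using path unfolding is_path_def by blast

lemma mor_hom:
  assumes "k < n"
  shows "mor k \<in> hom C (U (dom_idx kd k)) (U (cod_idx kd k))"
  using path assms fwd_hom[OF dcat] bwd_hom[OF dcat]
  by (cases "kd k") (auto simp: is_path_def dom_idx_def cod_idx_def invertible_def inverse_pair_def)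

lemma tstep_iff:
  "tstep V p q \<longleftrightarrow> (\<exists>k < n. \<exists>g \<in> hom C V (U (dom_idx kd k)).
     p = (dom_idx kd k, g) \<and> q = (cod_idx kd k, cmp C (mor k) g))"
  by (auto simp: trk_step_def dom_idx_def cod_idx_def)

lemma tstep_cmp:
  assumes "tstep V p q" and \<phi>: "\<phi> \<in> hom C W V"
  shows "tstep W (fst p, cmp C (snd p) \<phi>) (fst q, cmp C (snd q) \<phi>)"
proof -
  obtain k g where k: "k < n" and g: "g \<in> hom C V (U (dom_idx kd k))"
    and p: "p = (dom_idx kd k, g)" and q: "q = (cod_idx kd k, cmp C (mor k) g)"
    using assms(1) tstep_iff by blast
  have "cmp C (cmp C (mor k) g) \<phi> = cmp C (mor k) (cmp C g \<phi>)"
    using category_cmp_assoc[OF category \<phi> g mor_hom[OF k]] by simp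
  moreover have "cmp C g \<phi> \<in> hom C W (U (dom_idx kd k))"
    using category_cmp_hom[OF category \<phi> g] .
  ultimately show ?thesis
    using k p q tstep_iff by auto
qed

lemma equivclp_tstep_cmp:
  assumes "equivclp (tstep V) p q" and \<phi>: "\<phi> \<in> hom C W V"
  shows "equivclp (tstep W) (fst p, cmp C (snd p) \<phi>) (fst q, cmp C (snd q) \<phi>)"
  using assms(1)
proof (induction rule: equivclp_induct)
  case (step q r)
  then show ?case
    using tstep_cmp[OF _ \<phi>] by (blast intro: equivclp_into_equivclp)
qed simp

lemma tclass_eqI: "equivclp (tstep V) p q \<Longrightarrow> tclass V p = tclass V q"
  unfolding trk_class_equivclp by (blast intro: equivclp_sym equivclp_trans)

lemma tclass_refl: "p \<in> tclass V p"
  by (simp add: trk_class_equivclp)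

lemma act_tclass:
  assumes \<phi>: "\<phi> \<in> hom C W V"
  shows "act track W V \<phi> (tclass V (k, g)) = tclass W (k, cmp C g \<phi>)"
proof -
  have "act track W V \<phi> (tclass V (k, g)) = (\<Union>(k', g') \<in> tclass V (k, g). tclass W (k', cmp C g' \<phi>))"
    by (auto simp: track_aut_def trk_class_equivclp trk_eq_equivclp)
  also have "\<dots> = tclass W (k, cmp C g \<phi>)"
  proof (intro equalityI subsetI)
    fix q assume "q \<in> (\<Union>(k', g') \<in> tclass V (k, g). tclass W (k', cmp C g' \<phi>))"
    then obtain k' g' where "equivclp (tstep V) (k, g) (k', g')" and q: "q \<in> tclass W (k', cmp C g' \<phi>)"
      unfolding trk_class_equivclp by blast
    with equivclp_tstep_cmp[OF _ \<phi>] have "tclass W (k, cmp C g \<phi>) = tclass W (k', cmp C g' \<phi>)"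
      using tclass_eqI by fastforce
    with q show "q \<in> tclass W (k, cmp C g \<phi>)" by simp
  qed (use tclass_refl in blast)
  finally show ?thesis .
qed

lemma el_track: "el track V = {tclass V p | p. path_arrow V p}"
  by (auto simp: track_aut_def path_arrow_def)

lemma vertex_el: "k \<le> n \<Longrightarrow> vertex k \<in> el track (U k)"
  unfolding el_track path_arrow_def using category_idm_hom[OF category vertex_obj] by auto

lemma act_vertex:
  assumes k: "k < n"
  shows "act track (U (dom_idx kd k)) (U (cod_idx kd k)) (mor k) (vertex (cod_idx kd k)) =
    vertex (dom_idx kd k)"
proof -
  let ?d = "dom_idx kd k" and ?c = "cod_idx kd k"
  have m: "mor k \<in> hom C (U ?d) (U ?c)" using mor_hom[OF k] .
  have "tstep (U ?d) (?d, idm C (U ?d)) (?c, cmp C (mor k) (idm C (U ?d)))"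
    using k category_idm_hom[OF category vertex_obj] dom_cod_idx_le tstep_iff by blast
  then have "vertex ?d = tclass (U ?d) (?c, mor k)"
    using tclass_eqI category_idm_right[OF category m] by (metis r_into_equivclp)
  then show ?thesis
    using act_tclass[OF m] category_idm_left[OF category m] by simp
qed

lemma compatible_family_of_map:
  assumes H: "presheaf_map C track X H"
  shows "compatible_family X n U kd mor (\<lambda>k. H (U k) (vertex k))"
  unfolding compatible_family_def
proof (intro conjI allI impI)
  show "H (U k) (vertex k) \<in> el X (U k)" if "k \<le> n" for k
    using presheaf_map_el[OF H vertex_obj[OF that] vertex_el[OF that]] .
next
  fix k assume k: "k < n"
  then show "act X (U (dom_idx kd k)) (U (cod_idx kd k)) (mor k) (H (U (cod_idx kd k)) (vertex (cod_idx kd k))) =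
      H (U (dom_idx kd k)) (vertex (dom_idx kd k))"
    using presheaf_map_act[OF H mor_hom vertex_el] act_vertex dom_cod_idx_le by metis
qed

definition family_val :: "('o, 'm, 'y) automaton \<Rightarrow> (nat \<Rightarrow> 'y) \<Rightarrow> 'o \<Rightarrow> nat \<times> 'm \<Rightarrow> 'y" where
  "family_val Y z V p = act Y V (U (fst p)) (snd p) (z (fst p))"

text \<open>The choice of representative is irrelevant by \<open>equivclp_family_val\<close>.\<close>

definition family_map :: "('o, 'm, 'y) automaton \<Rightarrow> (nat \<Rightarrow> 'y) \<Rightarrow> 'o \<Rightarrow> (nat \<times> 'm) set \<Rightarrow> 'y" where
  "family_map Y z V c = family_val Y z V (SOME p. p \<in> c \<and> path_arrow V p)"

context
  fixes Y :: "('o, 'm, 'y) automaton" and z :: "nat \<Rightarrow> 'y"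
  assumes Y: "presheaf C Y" and z: "compatible_family Y n U kd mor z"
begin

lemma tstep_family_val:
  assumes "tstep V p q"
  shows "path_arrow V p \<and> path_arrow V q \<and> family_val Y z V p = family_val Y z V q"
proof -
  obtain k g where k: "k < n" and g: "g \<in> hom C V (U (dom_idx kd k))"
    and p: "p = (dom_idx kd k, g)" and q: "q = (cod_idx kd k, cmp C (mor k) g)"
    using assms tstep_iff by blast
  have le: "dom_idx kd k \<le> n" "cod_idx kd k \<le> n"
    using dom_cod_idx_le[OF k] by auto
  have "family_val Y z V q =
      act Y V (U (dom_idx kd k)) g (act Y (U (dom_idx kd k)) (U (cod_idx kd k)) (mor k) (z (cod_idx kd k)))"
    using presheaf_act_cmp[OF Y g mor_hom[OF k]] z le(2) q
    unfolding family_val_def compatible_family_def by simp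
  also have "\<dots> = family_val Y z V p"
    using z k p unfolding family_val_def compatible_family_def by simp
  finally show ?thesis
    using le g p q category_cmp_hom[OF category g mor_hom[OF k]] unfolding path_arrow_def by simp
qed

lemma equivclp_family_val:
  assumes "equivclp (tstep V) p q" and "path_arrow V p"
  shows "path_arrow V q \<and> family_val Y z V p = family_val Y z V q"
  using assms(1)
proof (induction rule: equivclp_induct)
  case base
  then show ?case using assms(2) by simp
next
  case (step q r)
  then show ?case using tstep_family_val by metis
qed

lemma family_map_tclass:
  assumes "path_arrow V p"
  shows "family_map Y z V (tclass V p) = family_val Y z V p"
proof -
  let ?q = "SOME q. q \<in> tclass V p \<and> path_arrow V q"
  have "?q \<in> tclass V p \<and> path_arrow V ?q"
    by (rule someI[where x = p]) (simp add: assms tclass_refl)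
  then have "family_val Y z V p = family_val Y z V ?q"
    using equivclp_family_val[OF _ assms] unfolding trk_class_equivclp by blast
  then show ?thesis
    unfolding family_map_def by simp
qed

lemma family_map_arrow:
  "k \<le> n \<Longrightarrow> g \<in> hom C V (U k) \<Longrightarrow> family_map Y z V (tclass V (k, g)) = act Y V (U k) g (z k)"
  using family_map_tclass[of V "(k, g)"] unfolding path_arrow_def family_val_def by simp

lemma family_map_vertex: "k \<le> n \<Longrightarrow> family_map Y z (U k) (vertex k) = z k"
  using family_map_arrow category_idm_hom[OF category vertex_obj] presheaf_act_idm[OF Y vertex_obj] z
  unfolding compatible_family_def by simp

lemma presheaf_map_family_map: "presheaf_map C track Y (family_map Y z)"
  unfolding presheaf_map_def
proof (intro conjI allI ballI impI)
  fix V c assume "c \<in> el track V"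
  then obtain k g where k: "k \<le> n" and g: "g \<in> hom C V (U k)" and c: "c = tclass V (k, g)"
    unfolding el_track path_arrow_def by auto
  show "family_map Y z V c \<in> el Y V"
    using family_map_arrow[OF k g] presheaf_act_el[OF Y g] z k c unfolding compatible_family_def by simp
next
  fix W V \<phi> c assume \<phi>: "\<phi> \<in> hom C W V" and "c \<in> el track V"
  then obtain k g where k: "k \<le> n" and g: "g \<in> hom C V (U k)" and c: "c = tclass V (k, g)"
    unfolding el_track path_arrow_def by auto
  have "family_map Y z W (act track W V \<phi> c) = act Y W (U k) (cmp C g \<phi>) (z k)"
    using act_tclass[OF \<phi>] family_map_arrow[OF k category_cmp_hom[OF category \<phi> g]] c by simp
  also have "\<dots> = act Y W V \<phi> (family_map Y z V c)"
    using presheaf_act_cmp[OF Y \<phi> g] family_map_arrow[OF k g] z k c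
    unfolding compatible_family_def by simp
  finally show "family_map Y z W (act track W V \<phi> c) = act Y W V \<phi> (family_map Y z V c)" .
qed

end

lemma aut_mor_from_track_iff:
  assumes Y: "presheaf C Y"
  shows "(\<exists>L. aut_mor C track Y L) \<longleftrightarrow>
    (\<exists>z. compatible_family Y n U kd mor z \<and> (U 0, z 0) \<in> start Y \<and> (U n, z n) \<in> accept Y)"
proof
  assume "\<exists>L. aut_mor C track Y L"
  then obtain L where L: "aut_mor C track Y L" ..
  have "start track = {(U 0, vertex 0)}" and "accept track = {(U n, vertex n)}"
    by (simp_all add: track_aut_def)
  then have "(U 0, L (U 0) (vertex 0)) \<in> start Y" and "(U n, L (U n) (vertex n)) \<in> accept Y"
    using L unfolding aut_mor_def by simp_all
  moreover have "compatible_family Y n U kd mor (\<lambda>k. L (U k) (vertex k))"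
    using L compatible_family_of_map unfolding aut_mor_def by blast
  ultimately show "\<exists>z. compatible_family Y n U kd mor z \<and> (U 0, z 0) \<in> start Y \<and> (U n, z n) \<in> accept Y"
    by blast
next
  assume "\<exists>z. compatible_family Y n U kd mor z \<and> (U 0, z 0) \<in> start Y \<and> (U n, z n) \<in> accept Y"
  then obtain z where z: "compatible_family Y n U kd mor z"
    and "(U 0, z 0) \<in> start Y" and "(U n, z n) \<in> accept Y" by blast
  then have "aut_mor C track Y (family_map Y z)"
    using presheaf_map_family_map[OF Y z] family_map_vertex[OF Y z]
    unfolding aut_mor_def by (simp add: track_aut_def)
  then show "\<exists>L. aut_mor C track Y L" by blast
qed

context
  fixes X :: "('o, 'm, 'x) automaton" and Y :: "('o, 'm, 'y) automaton" and f :: "'o \<Rightarrow> 'y \<Rightarrow> 'x"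
  assumes X: "presheaf C X" and Y: "presheaf C Y"
    and f: "presheaf_map C Y X f" and f_open: "future_open C Y X f"
begin

lemma future_open_lift_edge:
  assumes k: "k < n" and x: "compatible_family X n U kd mor x"
    and y: "y \<in> el Y (U k)" and fy: "f (U k) y = x k"
  shows "\<exists>y' \<in> el Y (U (Suc k)). f (U (Suc k)) y' = x (Suc k) \<and>
    (if kd k = PT then act Y (U (Suc k)) (U k) (mor k) y = y'
     else act Y (U k) (U (Suc k)) (mor k) y' = y)"
proof -
  have x_el: "x (Suc k) \<in> el X (U (Suc k))"
    using x k unfolding compatible_family_def by simp
  have x_act: "act X (U (dom_idx kd k)) (U (cod_idx kd k)) (mor k) (x (cod_idx kd k)) = x (dom_idx kd k)"
    using x k unfolding compatible_family_def by simp
  show ?thesis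
  proof (cases "kd k")
    case PS
    then have "mor k \<in> fwd C (U k) (U (Suc k))"
      using path k unfolding is_path_def by simp
    moreover have "act X (U k) (U (Suc k)) (mor k) (x (Suc k)) = f (U k) y"
      using x_act fy PS by (simp add: dom_idx_def cod_idx_def)
    ultimately show ?thesis
      using future_openD[OF f_open _ y x_el] PS by auto
  next
    case PT
    then have m: "mor k \<in> hom C (U (Suc k)) (U k)"
      using mor_hom[OF k] by (simp add: dom_idx_def cod_idx_def)
    have "f (U (Suc k)) (act Y (U (Suc k)) (U k) (mor k) y) = x (Suc k)"
      using presheaf_map_act[OF f m y] fy x_act PT by (simp add: dom_idx_def cod_idx_def)
    then show ?thesis
      using presheaf_act_el[OF Y m y] PT by auto
  next
    case PI
    then obtain \<psi> where \<psi>: "inverse_pair C (U k) (U (Suc k)) (mor k) \<psi>"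
      using path k unfolding is_path_def invertible_def by auto
    then have \<psi>_hom: "\<psi> \<in> hom C (U (Suc k)) (U k)"
      unfolding inverse_pair_def by simp
    let ?y' = "act Y (U (Suc k)) (U k) \<psi> y"
    have "f (U (Suc k)) ?y' = act X (U (Suc k)) (U k) \<psi> (act X (U k) (U (Suc k)) (mor k) (x (Suc k)))"
      using presheaf_map_act[OF f \<psi>_hom y] fy x_act PI by (simp add: dom_idx_def cod_idx_def)
    also have "\<dots> = x (Suc k)"
      using presheaf_act_inverse[OF category X inverse_pair_sym[OF \<psi>] x_el] .
    finally show ?thesis
      using presheaf_act_el[OF Y \<psi>_hom y] presheaf_act_inverse[OF category Y \<psi> y] PI by auto
  qed
qed

lemma future_open_lift_family:
  assumes x: "compatible_family X n U kd mor x" and y: "y \<in> el Y (U 0)" and fy: "f (U 0) y = x 0"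
  shows "\<exists>z. compatible_family Y n U kd mor z \<and> z 0 = y \<and> (\<forall>k \<le> n. f (U k) (z k) = x k)"
proof -
  have "\<exists>z. compatible_family Y m U kd mor z \<and> z 0 = y \<and> (\<forall>k \<le> m. f (U k) (z k) = x k)"
    if "m \<le> n" for m
    using that
  proof (induction m)
    case 0
    then show ?case
      using y fy by (auto simp: compatible_family_def)
  next
    case (Suc m)
    then obtain z where z: "compatible_family Y m U kd mor z" "z 0 = y" "\<forall>k \<le> m. f (U k) (z k) = x k"
      by auto
    then have "z m \<in> el Y (U m)"
      unfolding compatible_family_def by simp
    then obtain y' where "y' \<in> el Y (U (Suc m))" "f (U (Suc m)) y' = x (Suc m)"
      and "if kd m = PT then act Y (U (Suc m)) (U m) (mor m) (z m) = y'
           else act Y (U m) (U (Suc m)) (mor m) y' = z m"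
      using future_open_lift_edge[OF _ x] Suc.prems z(3) by (metis Suc_le_lessD order_refl)
    moreover have "compatible_family Y m U kd mor (z(Suc m := y'))"
      using z(1) compatible_family_cong[of m "z(Suc m := y')" z Y] by simp
    ultimately have "compatible_family Y (Suc m) U kd mor (z(Suc m := y')) \<and> (z(Suc m := y')) 0 = y \<and>
      (\<forall>k \<le> Suc m. f (U k) ((z(Suc m := y')) k) = x k)"
      using z by (auto simp: compatible_family_Suc dom_idx_def cod_idx_def le_Suc_eq split: if_splits)
    then show ?case by blast
  qed
  then show ?thesis by blast
qed

lemma lift_aut_mor_from_track:
  assumes start: "start X \<subseteq> el_image f (start Y)" and start_Y: "start Y \<subseteq> elements C Y"
    and accept: "accept Y = {(V, y) \<in> elements C Y. (V, f V y) \<in> accept X}"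
    and H: "aut_mor C track X H"
  obtains L where "aut_mor C track Y L"
proof -
  obtain x where x: "compatible_family X n U kd mor x"
    and x_start: "(U 0, x 0) \<in> start X" and x_accept: "(U n, x n) \<in> accept X"
    using H aut_mor_from_track_iff[OF X] by blast
  have "(U 0, x 0) \<in> el_image f (start Y)"
    using start x_start by (rule subsetD)
  then obtain y where y: "(U 0, y) \<in> start Y" and fy: "f (U 0) y = x 0"
    unfolding el_image_iff by auto
  have "y \<in> el Y (U 0)"
    using y start_Y unfolding elements_def by blast
  then obtain z where z: "compatible_family Y n U kd mor z" and z0: "z 0 = y"
    and fz: "\<forall>k \<le> n. f (U k) (z k) = x k"
    using future_open_lift_family[OF x _ fy] by blast
  have "(U n, z n) \<in> accept Y"
    using accept z fz x_accept vertex_obj unfolding compatible_family_def elements_def by simp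
  then show ?thesis
    using that aut_mor_from_track_iff[OF Y] z z0 y by blast
qed

end

end

theorem proposition12:
  fixes C :: "('o, 'm) dcat"
    and X :: "('o, 'm, 'x) automaton"
    and Y :: "('o, 'm, 'y) automaton"
    and f :: "'o \<Rightarrow> 'y \<Rightarrow> 'x"
  assumes "d_category C"
    and "is_automaton C X"
    and "is_automaton C Y"
    and "aut_mor C Y X f"
    and "future_open C Y X f"
    and "start X \<subseteq> el_image f (start Y)"
    and "accept Y = {(U, y) \<in> elements C Y. (U, f U y) \<in> accept X}"
  shows "(Lang C Y :: ('o, 'm, 'g) automaton set) = Lang C X"
proof
  have cat: "category C" using assms(1) by (rule d_category_category)
  show "(Lang C Y :: ('o, 'm, 'g) automaton set) \<subseteq> Lang C X"
    using Lang_mono_aut_mor[OF cat assms(4)] .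
  show "Lang C X \<subseteq> (Lang C Y :: ('o, 'm, 'g) automaton set)"
  proof
    fix \<Gamma> :: "('o, 'm, 'g) automaton"
    assume "\<Gamma> \<in> Lang C X"
    then obtain n U kd mor where \<Gamma>: "track_object C \<Gamma>" and path: "is_path C n U kd mor"
      and iso: "aut_iso C \<Gamma> (track_aut C n U kd mor)" and "\<exists>h. aut_mor C \<Gamma> X h"
      unfolding Lang_def track_object_def by blast
    interpret d_path C n U kd mor
      using assms(1) path by (rule d_path.intro)
    obtain H where H: "aut_mor C track X H"
      using \<open>\<exists>h. aut_mor C \<Gamma> X h\<close> aut_iso_ex_aut_mor_iff[OF cat iso] by blast
    have X: "presheaf C X" and Y: "presheaf C Y" and f: "presheaf_map C Y X f"
      and start_Y: "start Y \<subseteq> elements C Y"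
      using assms(2-4) unfolding is_automaton_def aut_mor_def by auto
    obtain L where "aut_mor C track Y L"
      using lift_aut_mor_from_track[OF X Y f assms(5,6) start_Y assms(7) H] .
    then show "\<Gamma> \<in> Lang C Y"
      using \<Gamma> aut_iso_ex_aut_mor_iff[OF cat iso] unfolding Lang_def by blast
  qed
qed

end
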